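(* Let $n\ge1$, and let $\tau^1,\dots,\tau^n$, $\eta^{\{1,\dots,n\}}$, $\Lambda^{\mathcal J}$ be as in the context. For all $t,t_1,\dots,t_n\ge0$ with $\min(t_1,\dots,t_n)\ge t$, $$ \mathbb P(\tau^1>t_1,\dots,\tau^n>t_n\mid\mathcal F_t)=\exp\left\{-\sum_{\substack{\mathcal J\subseteq\{1,\dots,n\}\\ \mathcal J\neq\emptyset}}\ \sum_{\mathcal I\subseteq\mathcal J}(-1)^{|\mathcal J|-|\mathcal I|+1}\Lambda^{\mathcal I^c}_{\max\{t_i:\,i\in\mathcal J\}}\right\}\eta^{\{1,\dots,n\}}_t, $$ where $\mathcal I^c:=\{1,\dots,n\}\setminus\mathcal I$ and $\Lambda^\emptyset\equiv0$.
   Context: Let $(\Omega,\mathcal G,\mathbb F,\mathbb P)$ be a filtered probability space, $\mathbb F=(\mathcal F_t)_{t\ge0}$ satisfying the usual conditions. For $i=1,\dots,n$, let $K^i$ be an $\mathbb F$-adapted, càdlàg, increasing process with $K^i_0=0$ (possibly dependent across $i$), and let $\Theta^1,\dots,\Theta^n$ be unit exponential random variables, mutually independent and independent of $\mathcal F_\infty$. Define $\tau^i:=\inf\{t\ge0:K^i_t\ge\Theta^i\}$. For nonempty $\mathcal J\subseteq\{1,\dots,n\}$ let $K^{\mathcal J}:=\sum_{j\in\mathcal J}K^j$; then $\mathbb P(\min_{j\in\mathcal J}\tau^j>t\mid\mathcal F_t)=e^{-K^{\mathcal J}_t}$. Let $K^{\mathcal J,c}$ be the continuous part of $K^{\mathcal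 J}$, let $I^{\mathcal J}_t:=\sum_{s\le t}(1-e^{-\Delta K^{\mathcal J}_s})$ with canonical decomposition $I^{\mathcal J}=M^{I^{\mathcal J}}+A^{I^{\mathcal J}}$ ($M^{I^{\mathcal J}}$ an $\mathbb F$-local martingale, $A^{I^{\mathcal J}}$ $\mathbb F$-predictable of finite variation), and set $\Lambda^{\mathcal J}:=K^{\mathcal J,c}+A^{I^{\mathcal J}}$; set $\Lambda^\emptyset:=0$. Standing assumptions: for every nonempty $\mathcal J$, $K^{\mathcal J,c}$ and $A^{I^{\mathcal J}}$ are deterministic, $\Lambda^{\mathcal J}$ is continuous (as holds when the associated random times are totally inaccessible), and $e^{-K^{\mathcal J}_t}=\eta^{\mathcal J}_t e^{-\Lambda^{\mathcal J}_t}$ with $\eta^{\mathcal J}$ a nonnegative $\mathbb F$-martingale, $\eta^{\mathcal J}_0=1$. *)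

theory Defs
  imports "HOL-Probability.Probability"
begin

definition usual_filtration :: "'a measure \<Rightarrow> (real \<Rightarrow> 'a measure) \<Rightarrow> bool" where
  "usual_filtration M F \<longleftrightarrow>
     (\<forall>t\<ge>0. subalgebra M (F t)) \<and>
     (\<forall>s t. 0 \<le> s \<longrightarrow> s \<le> t \<longrightarrow> sets (F s) \<subseteq> sets (F t)) \<and>
     (\<forall>t\<ge>0. sets (F t) = (\<Inter>s\<in>{t<..}. sets (F s))) \<and>
     (\<forall>N. (\<exists>A\<in>null_sets M. N \<subseteq> A) \<longrightarrow> N \<in> sets (F 0))"

definition filtration_infty :: "'a measure \<Rightarrow> (real \<Rightarrow> 'a measure) \<Rightarrow> 'a measure" where
  "filtration_infty M F = sigma (space M) (\<Union>t\<in>{0..}. sets (F t))"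

definition adapted_proc :: "(real \<Rightarrow> 'a measure) \<Rightarrow> (real \<Rightarrow> 'a \<Rightarrow> real) \<Rightarrow> bool" where
  "adapted_proc F X \<longleftrightarrow> (\<forall>t\<ge>0. X t \<in> borel_measurable (F t))"

definition cadlag :: "(real \<Rightarrow> real) \<Rightarrow> bool" where
  "cadlag f \<longleftrightarrow> (\<forall>t\<ge>0. (f \<longlongrightarrow> f t) (at_right t)) \<and>
                (\<forall>t>0. \<exists>l. (f \<longlongrightarrow> l) (at_left t))"

definition martingale :: "'a measure \<Rightarrow> (real \<Rightarrow> 'a measure) \<Rightarrow> (real \<Rightarrow> 'a \<Rightarrow> real) \<Rightarrow> bool" where
  "martingale M F X \<longleftrightarrow> adapted_proc F X \<and> (\<forall>t\<ge>0. integrable M (X t)) \<and>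
     (\<forall>s t. 0 \<le> s \<longrightarrow> s \<le> t \<longrightarrow> (AE \<omega> in M. real_cond_exp M (F s) (X t) \<omega> = X s \<omega>))"

text \<open>tau^i = inf {t >= 0 : K^i_t >= Theta^i}, valued in [0,oo] (inf of empty set = oo).\<close>
definition hitting_time :: "(real \<Rightarrow> 'a \<Rightarrow> real) \<Rightarrow> ('a \<Rightarrow> real) \<Rightarrow> 'a \<Rightarrow> ereal" where
  "hitting_time K \<Theta> \<omega> = Inf {ereal t | t. 0 \<le> t \<and> \<Theta> \<omega> \<le> K t \<omega>}"

end

theory Submission
  imports Defs
begin

(* Given F_oo, the thresholds Theta^i are independent unit exponentials, so the conditional joint
   survival probability is exp (- sum_i K^i_{T i}). To condition on F_t, peel off the largest time:
   if S is the set of indices where T attains its maximum m and c is the next value, then the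
   martingale eta^S gives E[exp (- K^S_m) | F_c] = exp (- (Lambda^S_m - Lambda^S_c)) exp (- K^S_c).
   Induction on the number of distinct values of T produces a telescoping sum of increments of
   Lambda; the inclusion-exclusion exponent of the theorem, after Moebius inversion over subsets,
   is exactly that sum. *)

section \<open>The inclusion-exclusion exponent\<close>

lemma sum_supersets_alternating:
  assumes "finite A" "I \<subseteq> A"
  shows "(\<Sum>J | I \<subseteq> J \<and> J \<subseteq> A. (-1::'b::ring_1) ^ (card J - card I)) = (if I = A then 1 else 0)"
proof (cases "I = A")
  case True
  then have "{J. I \<subseteq> J \<and> J \<subseteq> A} = {A}" by auto
  with True show ?thesis by simp
next
  case False
  with assms have "I \<subset> A" by auto
  have fin: "finite {J. I \<subseteq> J \<and> J \<subseteq> A}"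
    using assms(1) by (rule finite_subset[rotated, OF iffD2[OF finite_Pow_iff]]) auto
  have "(-1::'b) ^ (card J - card I) = (-1) ^ card J * (-1) ^ card I" if "I \<subseteq> J" "J \<subseteq> A" for J
    using that assms card_mono[of J I] finite_subset[of J A]
    by (simp add: neg_one_power_add_eq_neg_one_power_diff[symmetric] power_add)
  then have "(\<Sum>J | I \<subseteq> J \<and> J \<subseteq> A. (-1::'b) ^ (card J - card I))
      = (\<Sum>J | I \<subseteq> J \<and> J \<subseteq> A. (-1) ^ card J) * (-1) ^ card I"
    by (simp add: sum_distrib_right)
  also have "(\<Sum>J | I \<subseteq> J \<and> J \<subseteq> A. (-1::'b) ^ card J) = 0"
    using card_subsupersets_even_odd[OF assms(1) \<open>I \<subset> A\<close>]
    by (intro sum_alternating_cancels[OF fin]) (simp add: conj_commute conj_left_commute)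
  finally show ?thesis using False by simp
qed

lemma sum_Pow_Moebius:
  fixes g :: "'a set \<Rightarrow> 'b::comm_ring_1"
  assumes "finite A"
  shows "(\<Sum>J\<in>Pow A. \<Sum>I\<in>Pow J. (-1) ^ (card J - card I) * g I) = g A"
proof -
  have "(\<Sum>J\<in>Pow A. \<Sum>I\<in>Pow J. (-1) ^ (card J - card I) * g I)
      = (\<Sum>J\<in>Pow A. \<Sum>I | I \<in> Pow A \<and> I \<subseteq> J. (-1) ^ (card J - card I) * g I)"
    by (intro sum.cong refl) auto
  also have "\<dots> = (\<Sum>I\<in>Pow A. \<Sum>J | J \<in> Pow A \<and> I \<subseteq> J. (-1) ^ (card J - card I) * g I)"
    using assms by (intro sum.swap_restrict) auto
  also have "\<dots> = (\<Sum>I\<in>Pow A. (\<Sum>J | I \<subseteq> J \<and> J \<subseteq> A. (-1) ^ (card J - card I)) * g I)"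
    by (intro sum.cong refl) (auto simp: sum_distrib_right conj_commute)
  also have "\<dots> = (\<Sum>I\<in>Pow A. if I = A then g A else 0)"
    by (intro sum.cong refl) (simp add: sum_supersets_alternating[OF assms])
  also have "\<dots> = g A"
    using assms by simp
  finally show ?thesis .
qed

definition survival_exponent :: "'i set \<Rightarrow> ('i set \<Rightarrow> real \<Rightarrow> real) \<Rightarrow> ('i \<Rightarrow> real) \<Rightarrow> real" where
  "survival_exponent N L T = (\<Sum>J\<in>{J. J \<subseteq> N \<and> J \<noteq> {}}. \<Sum>I\<in>Pow J.
     (-1) ^ (card J - card I + 1) * L (N - I) (Max (T ` J)))"

lemma survival_exponent_const:
  assumes "finite N" "N \<noteq> {}" "\<And>s. L {} s = 0" "\<And>i. i \<in> N \<Longrightarrow> T i = c"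
  shows "survival_exponent N L T = L N c"
proof -
  let ?h = "\<lambda>J. \<Sum>I\<in>Pow J. (-1) ^ (card J - card I) * L (N - I) c"
  have "Max (T ` J) = c" if "J \<subseteq> N" "J \<noteq> {}" for J
  proof -
    from that assms(4) have "T ` J = {c}" by auto
    then show ?thesis by simp
  qed
  then have "survival_exponent N L T = - (\<Sum>J\<in>Pow N - {{}}. ?h J)"
    unfolding survival_exponent_def
    by (auto simp: sum_negf[symmetric] sum_distrib_left intro!: sum.cong)
  also have "\<dots> = - ((\<Sum>J\<in>Pow N. ?h J) - ?h {})"
    using assms(1) by (simp add: sum_diff1)
  also have "\<dots> = L N c"
    using assms(3) by (simp add: sum_Pow_Moebius[OF assms(1), of "\<lambda>I. L (N - I) c"])
  finally show ?thesis .
qed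

lemma survival_exponent_lower_top_level:
  assumes "finite N" "S \<subseteq> N" "\<And>s. L {} s = 0"
    and "\<And>i. i \<in> S \<Longrightarrow> T i = m" "\<And>i. i \<in> N - S \<Longrightarrow> T i \<le> c" "c \<le> m"
  shows "survival_exponent N L T
       = survival_exponent N L (\<lambda>i. if i \<in> S then c else T i) + (L S m - L S c)"
proof -
  define T' where "T' = (\<lambda>i. if i \<in> S then c else T i)"
  define \<mu> where "\<mu> I = L (N - I) m - L (N - I) c" for I
  define h where "h J = (\<Sum>I\<in>Pow J. (-1) ^ (card J - card I) * \<mu> I)" for J
  let ?JJ = "{J. J \<subseteq> N \<and> J \<noteq> {}}"
  let ?e = "\<lambda>T J. \<Sum>I\<in>Pow J. (-1) ^ (card J - card I + 1) * L (N - I) (Max (T ` J))"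
  have level_J: "?e T J - ?e T' J = (if J \<inter> S \<noteq> {} then - h J else 0)" if J: "J \<subseteq> N" for J
  proof (cases "J \<inter> S = {}")
    case True
    then have "T ` J = T' ` J" by (auto simp: T'_def)
    with True show ?thesis by simp
  next
    case False
    have fin: "finite J" using J assms(1) finite_subset by blast
    have "Max (T ` J) = m"
      using fin False J assms(4-6) by (intro Max_eqI) force+
    moreover have "Max (T' ` J) = c"
      using fin False J assms(5) by (intro Max_eqI) (force simp: T'_def)+
    ultimately show ?thesis
      using False by (simp add: h_def \<mu>_def sum_subtractf[symmetric] sum_negf[symmetric] algebra_simps)
  qed
  have "survival_exponent N L T - survival_exponent N L T' = (\<Sum>J\<in>?JJ. ?e T J - ?e T' J)"
    by (simp only: survival_exponent_def sum_subtractf)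
  also have "\<dots> = (\<Sum>J\<in>?JJ. if J \<inter> S \<noteq> {} then - h J else 0)"
    by (intro sum.cong refl level_J) auto
  also have "\<dots> = - (\<Sum>J\<in>Pow N - Pow (N - S). h J)"
  proof -
    have "{J \<in> ?JJ. J \<inter> S \<noteq> {}} = Pow N - Pow (N - S)" by auto
    then show ?thesis using assms(1) by (simp add: sum.inter_filter[symmetric] sum_negf)
  qed
  also have "\<dots> = \<mu> (N - S) - \<mu> N"
  proof -
    have "Pow (N - S) \<subseteq> Pow N" by auto
    with assms(1) show ?thesis
      by (simp add: sum_diff h_def sum_Pow_Moebius)
  qed
  also have "\<dots> = L S m - L S c"
    using assms(2,3) by (simp add: \<mu>_def double_diff)
  finally show ?thesis unfolding T'_def by simp
qed

lemma card_image_lower_top_level: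
  fixes T :: "'i \<Rightarrow> 'b::linorder"
  assumes "finite N" and S: "S = {i \<in> N. T i = Max (T ` N)}" and "N - S \<noteq> {}"
  shows "card ((\<lambda>i. if i \<in> S then Max (T ` (N - S)) else T i) ` N) < card (T ` N)"
proof -
  have "Max (T ` (N - S)) \<in> T ` (N - S)"
    using assms by simp
  then have "(\<lambda>i. if i \<in> S then Max (T ` (N - S)) else T i) ` N = T ` (N - S)"
    by (auto simp: S)
  also have "\<dots> \<subset> T ` N"
  proof -
    have "N \<noteq> {}"
      using assms(3) by blast
    then have "Max (T ` N) \<in> T ` N"
      using \<open>finite N\<close> by simp
    moreover have "Max (T ` N) \<notin> T ` (N - S)"
      by (auto simp: S)
    ultimately show ?thesis by blast
  qed
  finally show ?thesis
    using \<open>finite N\<close> by (intro psubset_card_mono) auto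
qed

section \<open>Exponential thresholds independent of a sigma-algebra\<close>

lemma hitting_time_greater_iff:
  fixes K :: "real \<Rightarrow> 'a \<Rightarrow> real"
  assumes "0 \<le> t" and mono: "mono_on {0..} (\<lambda>s. K s \<omega>)"
    and right_cont: "((\<lambda>s. K s \<omega>) \<longlongrightarrow> K t \<omega>) (at_right t)"
  shows "ereal t < hitting_time K \<Theta> \<omega> \<longleftrightarrow> K t \<omega> < \<Theta> \<omega>"
proof
  define Q where "Q = {ereal s | s. 0 \<le> s \<and> \<Theta> \<omega> \<le> K s \<omega>}"
  have hit: "hitting_time K \<Theta> \<omega> = Inf Q"
    unfolding Q_def hitting_time_def ..
  show "K t \<omega> < \<Theta> \<omega>" if "ereal t < hitting_time K \<Theta> \<omega>"
  proof (rule ccontr)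
    assume "\<not> K t \<omega> < \<Theta> \<omega>"
    with \<open>0 \<le> t\<close> have "ereal t \<in> Q" unfolding Q_def by auto
    then have "Inf Q \<le> ereal t" by (rule Inf_lower)
    with that hit show False by simp
  qed
  show "ereal t < hitting_time K \<Theta> \<omega>" if below: "K t \<omega> < \<Theta> \<omega>"
  proof -
    have "eventually (\<lambda>s. K s \<omega> < \<Theta> \<omega>) (at_right t)"
      using right_cont below by (rule order_tendstoD(2))
    then obtain b where "t < b" and b: "\<And>s. t < s \<Longrightarrow> s < b \<Longrightarrow> K s \<omega> < \<Theta> \<omega>"
      unfolding eventually_at_right_field by blast
    have "b \<le> s" if "0 \<le> s" "\<Theta> \<omega> \<le> K s \<omega>" for s
    proof (rule ccontr)
      assume "\<not> b \<le> s"
      moreover have "K s \<omega> \<le> K t \<omega>" if "s \<le> t"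
        using mono_onD[OF mono] that \<open>0 \<le> s\<close> by simp
      ultimately show False
        using b[of s] below \<open>\<Theta> \<omega> \<le> K s \<omega>\<close> by (cases "s \<le> t") auto
    qed
    then have "ereal b \<le> Inf Q"
      unfolding Q_def by (auto intro!: Inf_greatest)
    moreover have "ereal t < ereal b" using \<open>t < b\<close> by simp
    ultimately show ?thesis
      unfolding hit by (rule order_less_le_trans[rotated])
  qed
qed

lemma (in prob_space) prob_exponential_greater:
  assumes X: "distributed M lborel X (exponential_density l)" and "0 < l"
  shows "prob {\<omega>\<in>space M. x < X \<omega>} = exp (- max x 0 * l)"
proof (cases "0 \<le> x")
  case True
  then show ?thesis using exponential_distributedD_gt[OF X True \<open>0 < l\<close>] by simp
next
  case False
  have [measurable]: "X \<in> borel_measurable M"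
    using distributed_measurable[OF X] by simp
  have "prob {\<omega>\<in>space M. 0 < X \<omega>} = 1"
    using exponential_distributedD_gt[OF X order_refl \<open>0 < l\<close>] by simp
  moreover have "prob {\<omega>\<in>space M. 0 < X \<omega>} \<le> prob {\<omega>\<in>space M. x < X \<omega>}"
    using False by (intro finite_measure_mono) auto
  ultimately show ?thesis
    using False prob_le_1[of "{\<omega>\<in>space M. x < X \<omega>}"] by simp
qed

lemma (in prob_space) indep_sets_Some:
  assumes "indep_sets F (Some ` I)"
  shows "indep_sets (\<lambda>i. F (Some i)) I"
proof (rule indep_setsI)
  show "F (Some i) \<subseteq> events" if "i \<in> I" for i
    using assms that by (auto simp: indep_sets_def)
next
  fix A J assume J: "J \<noteq> {}" "J \<subseteq> I" "finite J" and A: "\<forall>j\<in>J. A j \<in> F (Some j)"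
  have "prob (\<Inter>j\<in>Some ` J. A (the j)) = (\<Prod>j\<in>Some ` J. prob (A (the j)))"
    using J A by (intro indep_setsD[OF assms]) auto
  then show "prob (\<Inter>j\<in>J. A j) = (\<Prod>j\<in>J. prob (A j))"
    by (simp add: prod.reindex)
qed

lemma Int_stable_vimage_sets: "Int_stable {X -` B \<inter> \<Omega> | B. B \<in> sets N}"
proof (rule Int_stableI)
  fix a b assume "a \<in> {X -` B \<inter> \<Omega> | B. B \<in> sets N}" "b \<in> {X -` B \<inter> \<Omega> | B. B \<in> sets N}"
  then obtain B C where "B \<in> sets N" "C \<in> sets N" "a = X -` B \<inter> \<Omega>" "b = X -` C \<inter> \<Omega>"
    by blast
  then show "a \<inter> b \<in> {X -` B \<inter> \<Omega> | B. B \<in> sets N}"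
    by (auto intro!: exI[of _ "B \<inter> C"])
qed

lemma (in prob_space) indep_set_subalgebra_variables:
  assumes "indep_sets (\<lambda>j. case j of None \<Rightarrow> sets G
      | Some i \<Rightarrow> {\<Theta> i -` B \<inter> space M | B. B \<in> sets borel}) (insert None (Some ` I))"
  shows "indep_set (sigma_sets (space M) (sets G))
    (sigma_sets (space M) (\<Union>i\<in>I. {\<Theta> i -` B \<inter> space M | B. B \<in> sets borel}))"
proof -
  define E where "E = (\<lambda>j. case j of None \<Rightarrow> sets G
      | Some i \<Rightarrow> {\<Theta> i -` B \<inter> space M | B. B \<in> sets borel})"
  define blocks where "blocks b = (if b then {None} else Some ` I)" for b
  have "indep_sets (\<lambda>b. sigma_sets (space M) (\<Union>j\<in>blocks b. E j)) UNIV"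
  proof (rule indep_sets_collect_sigma)
    have "(\<Union>b. blocks b) = insert None (Some ` I)"
      by (auto simp: blocks_def UNIV_bool)
    with assms show "indep_sets E (\<Union>b. blocks b)"
      by (simp add: E_def)
    show "Int_stable (E j)" if "j \<in> blocks b" for b j
      by (cases j) (simp_all add: E_def sets.Int_stable Int_stable_vimage_sets)
    show "disjoint_family_on blocks UNIV"
      by (auto simp: disjoint_family_on_def blocks_def)
  qed
  then show ?thesis
    unfolding indep_set_def
    by (rule indep_sets_cong[THEN iffD1, rotated 2]) (auto simp: blocks_def E_def split: bool.split)
qed

lemma (in prob_space) indep_var_subalgebra_comp_restrict:
  fixes \<Theta> :: "'i \<Rightarrow> 'a \<Rightarrow> real"
  assumes indep: "indep_sets (\<lambda>j. case j of None \<Rightarrow> sets G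
      | Some i \<Rightarrow> {\<Theta> i -` B \<inter> space M | B. B \<in> sets borel}) (insert None (Some ` I))"
    and G: "subalgebra M G" and V: "V \<in> measurable G S"
    and \<Theta>: "\<And>i. i \<in> I \<Longrightarrow> \<Theta> i \<in> borel_measurable M"
    and f: "f \<in> measurable (\<Pi>\<^sub>M i\<in>I. borel) T"
  shows "indep_var S V T (\<lambda>\<omega>. f (\<lambda>i\<in>I. \<Theta> i \<omega>))"
proof -
  define \<Theta>_sets where "\<Theta>_sets = (\<Union>i\<in>I. {\<Theta> i -` B \<inter> space M | B. B \<in> sets borel})"
  have \<Theta>_sets_space: "\<Theta>_sets \<subseteq> Pow (space M)"
    by (auto simp: \<Theta>_sets_def)
  have "{V -` B \<inter> space M | B. B \<in> sets S} \<subseteq> sigma_sets (space M) (sets G)"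
    using measurable_sets[OF V] G by (auto simp: subalgebra_def)
  moreover have "{(\<lambda>\<omega>. f (\<lambda>i\<in>I. \<Theta> i \<omega>)) -` B \<inter> space M | B. B \<in> sets T}
      \<subseteq> sigma_sets (space M) \<Theta>_sets"
  proof -
    have "\<Theta> i \<in> borel_measurable (sigma (space M) \<Theta>_sets)" if "i \<in> I" for i
      using that \<Theta>_sets_space by (intro measurableI) (auto simp: \<Theta>_sets_def)
    then have "(\<lambda>\<omega>. \<lambda>i\<in>I. \<Theta> i \<omega>) \<in> measurable (sigma (space M) \<Theta>_sets) (\<Pi>\<^sub>M i\<in>I. borel)"
      by (rule measurable_restrict)
    then have "(\<lambda>\<omega>. f (\<lambda>i\<in>I. \<Theta> i \<omega>)) \<in> measurable (sigma (space M) \<Theta>_sets) T"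
      using f by (rule measurable_compose)
    from measurable_sets[OF this] show ?thesis
      using \<Theta>_sets_space by auto
  qed
  ultimately have "indep_set (sigma_sets (space M) {V -` B \<inter> space M | B. B \<in> sets S})
      (sigma_sets (space M) {(\<lambda>\<omega>. f (\<lambda>i\<in>I. \<Theta> i \<omega>)) -` B \<inter> space M | B. B \<in> sets T})"
    using indep_set_subalgebra_variables[OF indep]
    unfolding indep_set_def \<Theta>_sets_def[symmetric]
    by (elim indep_sets_mono_sets) (simp_all add: sigma_sets_mono split: bool.split)
  moreover have "random_variable S V"
    using measurable_from_subalg[OF G V] .
  moreover have "random_variable T (\<lambda>\<omega>. f (\<lambda>i\<in>I. \<Theta> i \<omega>))"
    using measurable_restrict[OF \<Theta>] f by (rule measurable_compose)
  ultimately show ?thesis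
    by (simp add: indep_var_eq)
qed

lemma (in prob_space) integral_indep_var_freeze:
  fixes g :: "'b \<times> 'b \<Rightarrow> real"
  assumes indep: "indep_var S V T W" and g: "g \<in> borel_measurable (S \<Otimes>\<^sub>M T)"
    and bounded: "\<And>z. \<bar>g z\<bar> \<le> B"
  shows "(\<integral>\<omega>. g (V \<omega>, W \<omega>) \<partial>M) = (\<integral>\<omega>. (\<integral>\<omega>'. g (V \<omega>, W \<omega>') \<partial>M) \<partial>M)"
proof -
  have V: "random_variable S V" and W: "random_variable T W"
    and joint: "distr M S V \<Otimes>\<^sub>M distr M T W = distr M (S \<Otimes>\<^sub>M T) (\<lambda>\<omega>. (V \<omega>, W \<omega>))"
    using indep by (simp_all add: indep_var_distribution_eq)
  interpret DV: prob_space "distr M S V" by (rule prob_space_distr[OF V])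
  interpret DW: prob_space "distr M T W" by (rule prob_space_distr[OF W])
  interpret D: pair_prob_space "distr M S V" "distr M T W" ..
  have g_D: "g \<in> borel_measurable (distr M S V \<Otimes>\<^sub>M distr M T W)"
    unfolding joint using g by simp
  have "(\<integral>\<omega>. g (V \<omega>, W \<omega>) \<partial>M) = (\<integral>z. g z \<partial>(distr M S V \<Otimes>\<^sub>M distr M T W))"
    unfolding joint by (rule integral_distr[symmetric, OF measurable_Pair[OF V W] g])
  also have "\<dots> = (\<integral>v. (\<integral>y. g (v, y) \<partial>distr M T W) \<partial>distr M S V)"
    using g_D bounded by (intro D.integral_fst'[symmetric] D.P.integrable_const_bound[where B=B]) auto
  also have "\<dots> = (\<integral>\<omega>. (\<integral>y. g (V \<omega>, y) \<partial>distr M T W) \<partial>M)"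
    using g_D by (intro integral_distr V DW.borel_measurable_lebesgue_integral) simp
  also have "\<dots> = (\<integral>\<omega>. (\<integral>\<omega>'. g (V \<omega>, W \<omega>') \<partial>M) \<partial>M)"
  proof (intro Bochner_Integration.integral_cong refl integral_distr W)
    fix \<omega> assume "\<omega> \<in> space M"
    then show "(\<lambda>y. g (V \<omega>, y)) \<in> borel_measurable T"
      using measurable_space[OF V] by (intro measurable_compose[OF measurable_Pair1' g])
  qed
  finally show ?thesis .
qed

lemma (in prob_space) integral_indicator_less_indep_exponentials:
  assumes "finite I" and indep: "indep_vars (\<lambda>_. borel) \<Theta> I"
    and \<Theta>_exp: "\<And>i. i \<in> I \<Longrightarrow> distributed M lborel (\<Theta> i) (exponential_density 1)"
  shows "(\<integral>\<omega>. (\<Prod>i\<in>I. if x i < \<Theta> i \<omega> then 1 else 0) \<partial>M) = exp (- (\<Sum>i\<in>I. max (x i) 0))"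
proof -
  have "indep_vars (\<lambda>_. borel) (\<lambda>i \<omega>. if x i < \<Theta> i \<omega> then 1 else 0::real) I"
    by (rule indep_vars_compose2[OF indep]) measurable
  then have "(\<integral>\<omega>. (\<Prod>i\<in>I. if x i < \<Theta> i \<omega> then 1 else 0::real) \<partial>M)
      = (\<Prod>i\<in>I. \<integral>\<omega>. (if x i < \<Theta> i \<omega> then 1 else 0) \<partial>M)"
    using \<open>finite I\<close>
    by (subst indep_vars_lebesgue_integral) (auto intro!: integrable_const_bound[where B=1] simp: indep_vars_def2)
  also have "\<dots> = (\<Prod>i\<in>I. exp (- max (x i) 0))"
  proof (rule prod.cong[OF refl])
    fix i assume "i \<in> I"
    have "(\<integral>\<omega>. (if x i < \<Theta> i \<omega> then 1 else 0) \<partial>M)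
        = (\<integral>\<omega>. indicator {\<omega>\<in>space M. x i < \<Theta> i \<omega>} \<omega> \<partial>M)"
      by (intro Bochner_Integration.integral_cong) (auto simp: indicator_def)
    also have "\<dots> = prob {\<omega>\<in>space M. x i < \<Theta> i \<omega>}"
      by (simp add: Int_absorb2 subset_iff)
    finally show "(\<integral>\<omega>. (if x i < \<Theta> i \<omega> then 1 else 0) \<partial>M) = exp (- max (x i) 0)"
      using prob_exponential_greater[OF \<Theta>_exp[OF \<open>i \<in> I\<close>]] by simp
  qed
  also have "\<dots> = exp (- (\<Sum>i\<in>I. max (x i) 0))"
    using \<open>finite I\<close> by (simp add: exp_sum sum_negf[symmetric])
  finally show ?thesis .
qed

lemma (in prob_space) set_integral_below_indep_exponentials:
  fixes X \<Theta> :: "'i \<Rightarrow> 'a \<Rightarrow> real"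
  assumes "finite I" and G: "subalgebra M G"
    and indep: "indep_sets (\<lambda>j. case j of None \<Rightarrow> sets G
      | Some i \<Rightarrow> {\<Theta> i -` B \<inter> space M | B. B \<in> sets borel}) (insert None (Some ` I))"
    and \<Theta>_exp: "\<And>i. i \<in> I \<Longrightarrow> distributed M lborel (\<Theta> i) (exponential_density 1)"
    and X: "\<And>i. i \<in> I \<Longrightarrow> X i \<in> borel_measurable G"
    and A: "A \<in> sets G"
  shows "(\<integral>\<omega>\<in>A. indicator {\<omega>\<in>space M. \<forall>i\<in>I. X i \<omega> < \<Theta> i \<omega>} \<omega> \<partial>M)
       = (\<integral>\<omega>\<in>A. exp (- (\<Sum>i\<in>I. max (X i \<omega>) 0)) \<partial>M)"
proof -
  have \<Theta>_meas: "\<Theta> i \<in> borel_measurable M" if "i \<in> I" for i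
    using distributed_measurable[OF \<Theta>_exp[OF that]] by simp
  have indep_\<Theta>: "indep_vars (\<lambda>_. borel) \<Theta> I"
    using indep_sets_Some[OF indep_sets_mono_index[OF _ indep]] \<Theta>_meas
    by (auto simp: indep_vars_def2)
  define S :: "(real \<times> ('i \<Rightarrow> real)) measure" where "S = borel \<Otimes>\<^sub>M (\<Pi>\<^sub>M i\<in>I. borel)"
  define V where "V \<omega> = (indicator A \<omega> :: real, \<lambda>i\<in>I. X i \<omega>)" for \<omega>
  (* indep_var needs both variables in one space, hence the dummy first component of W. *)
  define W where "W \<omega> = (0 :: real, \<lambda>i\<in>I. \<Theta> i \<omega>)" for \<omega>
  (* indicator {1} a = a for a in {0, 1}, and unlike the identity it keeps g bounded. *)
  define g :: "_ \<Rightarrow> real"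
    where "g z = indicator {1} (fst (fst z)) * (\<Prod>i\<in>I. if snd (fst z) i < snd (snd z) i then 1 else 0)"
    for z :: "(real \<times> ('i \<Rightarrow> real)) \<times> real \<times> ('i \<Rightarrow> real)"
  have V_G: "V \<in> measurable G S"
    unfolding V_def S_def using A X by (intro measurable_Pair measurable_restrict) auto
  have indep_VW: "indep_var S V S W"
    unfolding W_def
    by (rule indep_var_subalgebra_comp_restrict[OF indep G V_G \<Theta>_meas, where f="\<lambda>y. (0, y)"])
      (auto simp: S_def intro!: measurable_Pair)
  have g_meas: "g \<in> borel_measurable (S \<Otimes>\<^sub>M S)"
    unfolding g_def S_def by measurable
  have g_bounded: "\<bar>g z\<bar> \<le> 1" for z
    unfolding g_def by (auto simp: abs_mult prod_nonneg intro!: mult_le_one prod_le_1)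
  have "(\<integral>\<omega>\<in>A. indicator {\<omega>\<in>space M. \<forall>i\<in>I. X i \<omega> < \<Theta> i \<omega>} \<omega> \<partial>M) = (\<integral>\<omega>. g (V \<omega>, W \<omega>) \<partial>M)"
    unfolding set_lebesgue_integral_def using \<open>finite I\<close>
    by (intro Bochner_Integration.integral_cong) (auto simp: g_def V_def W_def indicator_def prod_zero_iff)
  also have "\<dots> = (\<integral>\<omega>. (\<integral>\<omega>'. g (V \<omega>, W \<omega>') \<partial>M) \<partial>M)"
    using indep_VW g_meas g_bounded by (rule integral_indep_var_freeze)
  also have "\<dots> = (\<integral>\<omega>\<in>A. exp (- (\<Sum>i\<in>I. max (X i \<omega>) 0)) \<partial>M)"
    unfolding set_lebesgue_integral_def
    using integral_indicator_less_indep_exponentials[OF \<open>finite I\<close> indep_\<Theta> \<Theta>_exp]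
    by (intro Bochner_Integration.integral_cong) (auto simp: g_def V_def W_def indicator_def)
  finally show ?thesis .
qed

section \<open>Conditional survival in the Cox model\<close>

lemma space_filtration_infty: "space (filtration_infty M F) = space M"
  by (simp add: filtration_infty_def space_measure_of_conv)

lemma sets_filtration_infty:
  assumes "\<And>t. 0 \<le> t \<Longrightarrow> subalgebra M (F t)"
  shows "sets (filtration_infty M F) = sigma_sets (space M) (\<Union>t\<in>{0..}. sets (F t))"
proof -
  have "A \<subseteq> space M" if "0 \<le> t" "A \<in> sets (F t)" for t A
    using sets.sets_into_space[OF that(2)] assms[OF that(1)] by (simp add: subalgebra_def)
  then show ?thesis
    unfolding filtration_infty_def by (intro sets_measure_of) auto
qed

lemma subalgebra_filtration_infty:
  assumes "\<And>t. 0 \<le> t \<Longrightarrow> subalgebra M (F t)"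
  shows "subalgebra M (filtration_infty M F)"
proof -
  have "(\<Union>t\<in>{0..}. sets (F t)) \<subseteq> sets M"
    using assms by (auto simp: subalgebra_def)
  then show ?thesis
    by (simp add: subalgebra_def sets_filtration_infty[OF assms] space_filtration_infty
        sets.sigma_sets_subset)
qed

lemma subalgebra_filtration_infty_F:
  assumes "\<And>t. 0 \<le> t \<Longrightarrow> subalgebra M (F t)" and "0 \<le> t"
  shows "subalgebra (filtration_infty M F) (F t)"
  using assms
  by (auto simp: subalgebra_def sets_filtration_infty space_filtration_infty intro: sigma_sets.Basic)

lemma (in sigma_finite_subalgebra) real_cond_exp_nested_cmult:
  assumes G: "subalgebra M G" "subalgebra G F" and "integrable M X" "integrable M Y"
    and XY: "AE \<omega> in M. real_cond_exp M G X \<omega> = C * Y \<omega>"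
  shows "AE \<omega> in M. real_cond_exp M F X \<omega> = C * real_cond_exp M F Y \<omega>"
proof -
  have "AE \<omega> in M. real_cond_exp M F (real_cond_exp M G X) \<omega> = real_cond_exp M F X \<omega>"
    using G \<open>integrable M X\<close> by (rule real_cond_exp_nested_subalg)
  moreover have "AE \<omega> in M. real_cond_exp M F (real_cond_exp M G X) \<omega> = real_cond_exp M F (\<lambda>\<omega>. C * Y \<omega>) \<omega>"
    using XY borel_measurable_integrable[OF \<open>integrable M Y\<close>] by (intro real_cond_exp_cong) auto
  moreover have "AE \<omega> in M. real_cond_exp M F (\<lambda>\<omega>. C * Y \<omega>) \<omega> = C * real_cond_exp M F Y \<omega>"
    using \<open>integrable M Y\<close> by (rule real_cond_exp_cmult)
  ultimately show ?thesis
    by eventually_elim simp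
qed

locale cox_model = prob_space M for M :: "'a measure" +
  fixes F :: "real \<Rightarrow> 'a measure" and N :: "'i set"
    and K :: "'i \<Rightarrow> real \<Rightarrow> 'a \<Rightarrow> real" and \<Theta> :: "'i \<Rightarrow> 'a \<Rightarrow> real"
    and \<Lambda> :: "'i set \<Rightarrow> real \<Rightarrow> real" and \<eta> :: "'i set \<Rightarrow> real \<Rightarrow> 'a \<Rightarrow> real"
  assumes F_subalgebra: "0 \<le> t \<Longrightarrow> subalgebra M (F t)"
    and F_mono: "0 \<le> s \<Longrightarrow> s \<le> t \<Longrightarrow> sets (F s) \<subseteq> sets (F t)"
    and finite_N: "finite N" and N_nonempty: "N \<noteq> {}"
    and K_adapted: "i \<in> N \<Longrightarrow> adapted_proc F (K i)"
    and K_mono: "i \<in> N \<Longrightarrow> \<omega> \<in> space M \<Longrightarrow> mono_on {0..} (\<lambda>s. K i s \<omega>)"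
    and K_zero: "i \<in> N \<Longrightarrow> \<omega> \<in> space M \<Longrightarrow> K i 0 \<omega> = 0"
    and \<Theta>_exponential: "i \<in> N \<Longrightarrow> distributed M lborel (\<Theta> i) (exponential_density 1)"
    and \<Theta>_indep: "indep_sets (\<lambda>j. case j of None \<Rightarrow> sets (filtration_infty M F)
      | Some i \<Rightarrow> {\<Theta> i -` B \<inter> space M | B. B \<in> sets borel}) (insert None (Some ` N))"
    and \<Lambda>_empty: "\<Lambda> {} s = 0"
    and \<eta>_factor: "J \<subseteq> N \<Longrightarrow> J \<noteq> {} \<Longrightarrow> 0 \<le> s \<Longrightarrow> \<omega> \<in> space M \<Longrightarrow>
      exp (- (\<Sum>j\<in>J. K j s \<omega>)) = \<eta> J s \<omega> * exp (- \<Lambda> J s)"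
    and \<eta>_martingale: "J \<subseteq> N \<Longrightarrow> J \<noteq> {} \<Longrightarrow> martingale M F (\<eta> J)"
begin

lemma F_subalgebra_F: "0 \<le> s \<Longrightarrow> s \<le> t \<Longrightarrow> subalgebra (F t) (F s)"
  using F_subalgebra[of s] F_subalgebra[of t] F_mono[of s t] by (simp add: subalgebra_def)

lemma filtration_infty_subalgebra: "subalgebra M (filtration_infty M F)"
  by (rule subalgebra_filtration_infty) (rule F_subalgebra)

lemma F_subalgebra_filtration_infty: "0 \<le> t \<Longrightarrow> subalgebra (filtration_infty M F) (F t)"
  by (rule subalgebra_filtration_infty_F) (rule F_subalgebra)

lemma sigma_finite_subalgebra_F: "0 \<le> t \<Longrightarrow> sigma_finite_subalgebra M (F t)"
  using F_subalgebra
  by (intro finite_measure_subalgebra_is_sigma_finite)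
     (simp add: finite_measure_subalgebra_def finite_measure_subalgebra_axioms_def finite_measure_axioms)

lemma K_measurable:
  assumes "i \<in> N" "0 \<le> s" "s \<le> t"
  shows "K i s \<in> borel_measurable (F t)"
proof -
  have "K i s \<in> borel_measurable (F s)"
    using K_adapted[OF assms(1)] assms(2) by (simp add: adapted_proc_def)
  then show ?thesis
    by (rule measurable_from_subalg[OF F_subalgebra_F[OF assms(2,3)]])
qed

lemma K_measurable_filtration_infty:
  "i \<in> N \<Longrightarrow> 0 \<le> s \<Longrightarrow> K i s \<in> borel_measurable (filtration_infty M F)"
  using K_measurable[of i s s] measurable_from_subalg[OF F_subalgebra_filtration_infty] by blast

lemma K_borel_measurable: "i \<in> N \<Longrightarrow> 0 \<le> s \<Longrightarrow> K i s \<in> borel_measurable M"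
  using K_measurable_filtration_infty measurable_from_subalg[OF filtration_infty_subalgebra] by blast

lemma K_nonneg: "i \<in> N \<Longrightarrow> 0 \<le> s \<Longrightarrow> \<omega> \<in> space M \<Longrightarrow> 0 \<le> K i s \<omega>"
  using mono_onD[OF K_mono, of i \<omega> 0 s] K_zero by simp

(* P(T i < tau^i for all i in J | F_oo) *)
definition cond_survival :: "'i set \<Rightarrow> ('i \<Rightarrow> real) \<Rightarrow> 'a \<Rightarrow> real" where
  "cond_survival J T \<omega> = exp (- (\<Sum>i\<in>J. K i (T i) \<omega>))"

lemma cond_survival_measurable_F:
  assumes "J \<subseteq> N" "\<And>i. i \<in> J \<Longrightarrow> 0 \<le> T i \<and> T i \<le> t"
  shows "cond_survival J T \<in> borel_measurable (F t)"
proof -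
  have "(\<lambda>\<omega>. - (\<Sum>i\<in>J. K i (T i) \<omega>)) \<in> borel_measurable (F t)"
    using assms by (intro borel_measurable_uminus borel_measurable_sum K_measurable) auto
  then show ?thesis
    unfolding cond_survival_def by (rule measurable_compose[OF _ borel_measurable_exp])
qed

lemma cond_survival_borel_measurable:
  assumes "J \<subseteq> N" "\<And>i. i \<in> J \<Longrightarrow> 0 \<le> T i"
  shows "cond_survival J T \<in> borel_measurable M"
proof -
  have "K i (T i) \<in> borel_measurable M" if "i \<in> J" for i
    using K_borel_measurable assms that by blast
  then have "(\<lambda>\<omega>. - (\<Sum>i\<in>J. K i (T i) \<omega>)) \<in> borel_measurable M"
    by (intro borel_measurable_uminus borel_measurable_sum) auto
  then show ?thesis
    unfolding cond_survival_def by (rule measurable_compose[OF _ borel_measurable_exp])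
qed

lemma cond_survival_integrable:
  assumes "J \<subseteq> N" "\<And>i. i \<in> J \<Longrightarrow> 0 \<le> T i"
  shows "integrable M (cond_survival J T)"
proof (rule integrable_const_bound[where B=1])
  have "0 \<le> (\<Sum>i\<in>J. K i (T i) \<omega>)" if "\<omega> \<in> space M" for \<omega>
    using assms that by (intro sum_nonneg K_nonneg) auto
  then show "AE \<omega> in M. norm (cond_survival J T \<omega>) \<le> 1"
    by (simp add: cond_survival_def)
qed (rule cond_survival_borel_measurable[OF assms])

lemma cond_survival_split:
  "S \<subseteq> N \<Longrightarrow> cond_survival N T \<omega> = cond_survival (N - S) T \<omega> * cond_survival S T \<omega>"
  unfolding cond_survival_def
  by (simp add: sum.subset_diff[of S N] finite_N exp_add[symmetric])

lemma cond_survival_cong: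
  "(\<And>i. i \<in> J \<Longrightarrow> T i = T' i) \<Longrightarrow> cond_survival J T = cond_survival J T'"
  by (simp add: cond_survival_def fun_eq_iff)

lemma cond_exp_cond_survival_const:
  assumes J: "J \<subseteq> N" "J \<noteq> {}" and "0 \<le> s" "s \<le> u"
  shows "AE \<omega> in M. real_cond_exp M (F s) (cond_survival J (\<lambda>_. u)) \<omega> = exp (- \<Lambda> J u) * \<eta> J s \<omega>"
proof -
  interpret sigma_finite_subalgebra M "F s"
    using sigma_finite_subalgebra_F \<open>0 \<le> s\<close> .
  have "0 \<le> u" using assms by linarith
  have \<eta>_u: "\<eta> J u \<in> borel_measurable M" "integrable M (\<eta> J u)"
    using \<eta>_martingale[OF J] \<open>0 \<le> u\<close> measurable_from_subalg[OF F_subalgebra[OF \<open>0 \<le> u\<close>]]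
    by (auto simp: martingale_def adapted_proc_def)
  have "AE \<omega> in M. real_cond_exp M (F s) (cond_survival J (\<lambda>_. u)) \<omega>
      = real_cond_exp M (F s) (\<lambda>\<omega>. exp (- \<Lambda> J u) * \<eta> J u \<omega>) \<omega>"
    using J \<open>0 \<le> u\<close> \<eta>_u
    by (intro real_cond_exp_cong AE_I2 cond_survival_borel_measurable)
       (auto simp: cond_survival_def \<eta>_factor)
  moreover have "AE \<omega> in M. real_cond_exp M (F s) (\<lambda>\<omega>. exp (- \<Lambda> J u) * \<eta> J u \<omega>) \<omega>
      = exp (- \<Lambda> J u) * real_cond_exp M (F s) (\<eta> J u) \<omega>"
    using \<eta>_u(2) by (rule real_cond_exp_cmult)
  moreover have "AE \<omega> in M. real_cond_exp M (F s) (\<eta> J u) \<omega> = \<eta> J s \<omega>"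
    using \<eta>_martingale[OF J] assms(3,4) by (auto simp: martingale_def)
  ultimately show ?thesis
    by eventually_elim simp
qed

lemma cond_exp_cond_survival_lower_top_level:
  assumes S: "S \<subseteq> N" "S \<noteq> {}" and T_S: "\<And>i. i \<in> S \<Longrightarrow> T i = m"
    and T_rest: "\<And>i. i \<in> N - S \<Longrightarrow> s \<le> T i \<and> T i \<le> c"
    and "0 \<le> s" "s \<le> c" "c \<le> m"
  shows "AE \<omega> in M. real_cond_exp M (F s) (cond_survival N T) \<omega>
    = exp (- (\<Lambda> S m - \<Lambda> S c)) * real_cond_exp M (F s) (cond_survival N (\<lambda>i. if i \<in> S then c else T i)) \<omega>"
proof -
  define T' where "T' i = (if i \<in> S then c else T i)" for i
  define Z where "Z = cond_survival (N - S) T"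
  have "0 \<le> c" "0 \<le> m" using assms by linarith+
  interpret Fc: sigma_finite_subalgebra M "F c"
    using sigma_finite_subalgebra_F \<open>0 \<le> c\<close> .
  interpret Fs: sigma_finite_subalgebra M "F s"
    using sigma_finite_subalgebra_F \<open>0 \<le> s\<close> .
  have T_nonneg: "0 \<le> T i" "0 \<le> T' i" if "i \<in> N" for i
    using that T_S T_rest \<open>0 \<le> s\<close> \<open>0 \<le> c\<close> \<open>0 \<le> m\<close> by (force simp: T'_def)+
  have Z_meas: "Z \<in> borel_measurable (F c)"
    unfolding Z_def using T_rest \<open>0 \<le> s\<close> by (intro cond_survival_measurable_F) force+
  have split: "cond_survival N T = (\<lambda>\<omega>. Z \<omega> * cond_survival S (\<lambda>_. m) \<omega>)"
    using cond_survival_split[OF S(1), of T] cond_survival_cong[of S T "\<lambda>_. m"] T_S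
    by (simp add: Z_def fun_eq_iff)
  have split': "cond_survival N T' \<omega> = Z \<omega> * cond_survival S (\<lambda>_. c) \<omega>" for \<omega>
    using cond_survival_split[OF S(1), of T'] cond_survival_cong[of "N - S" T' T]
      cond_survival_cong[of S T' "\<lambda>_. c"]
    by (simp add: Z_def T'_def)
  have "AE \<omega> in M. real_cond_exp M (F c) (cond_survival N T) \<omega>
      = Z \<omega> * real_cond_exp M (F c) (cond_survival S (\<lambda>_. m)) \<omega>"
    unfolding split using S(1) \<open>0 \<le> m\<close> cond_survival_integrable[of N T] T_nonneg
    by (intro Fc.real_cond_exp_mult Z_meas cond_survival_borel_measurable) (auto simp: split)
  moreover have "AE \<omega> in M. real_cond_exp M (F c) (cond_survival S (\<lambda>_. m)) \<omega> = exp (- \<Lambda> S m) * \<eta> S c \<omega>"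
    using S \<open>0 \<le> c\<close> \<open>c \<le> m\<close> by (rule cond_exp_cond_survival_const)
  moreover have "AE \<omega> in M. \<eta> S c \<omega> = exp (\<Lambda> S c) * cond_survival S (\<lambda>_. c) \<omega>"
    using \<eta>_factor[OF S \<open>0 \<le> c\<close>] by (intro AE_I2) (simp add: cond_survival_def exp_minus field_simps)
  ultimately have "AE \<omega> in M. real_cond_exp M (F c) (cond_survival N T) \<omega>
      = exp (- (\<Lambda> S m - \<Lambda> S c)) * cond_survival N T' \<omega>"
    by eventually_elim (simp add: split' exp_diff exp_minus field_simps)
  then show ?thesis
    unfolding T'_def[symmetric]
    using T_nonneg
    by (intro Fs.real_cond_exp_nested_cmult[OF F_subalgebra[OF \<open>0 \<le> c\<close>]
        F_subalgebra_F[OF \<open>0 \<le> s\<close> \<open>s \<le> c\<close>]] cond_survival_integrable) auto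
qed

theorem cond_exp_cond_survival:
  assumes "0 \<le> s" "\<And>i. i \<in> N \<Longrightarrow> s \<le> T i"
  shows "AE \<omega> in M. real_cond_exp M (F s) (cond_survival N T) \<omega>
    = exp (- survival_exponent N \<Lambda> T) * \<eta> N s \<omega>"
  using assms(2)
proof (induction "card (T ` N)" arbitrary: T rule: less_induct)
  case less
  define m where "m = Max (T ` N)"
  define S where "S = {i \<in> N. T i = m}"
  have T_le_m: "T i \<le> m" if "i \<in> N" for i
    unfolding m_def using finite_N that by simp
  have "m \<in> T ` N"
    unfolding m_def using finite_N N_nonempty by simp
  then have S: "S \<subseteq> N" "S \<noteq> {}" and T_S: "\<And>i. i \<in> S \<Longrightarrow> T i = m" and "s \<le> m"
    using less.prems by (auto simp: S_def)
  show ?case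
  proof (cases "N - S = {}")
    case True
    with S(1) T_S have "\<And>i. i \<in> N \<Longrightarrow> T i = m"
      by blast
    then show ?thesis
      using cond_exp_cond_survival_const[OF subset_refl N_nonempty \<open>0 \<le> s\<close> \<open>s \<le> m\<close>]
        survival_exponent_const[where L=\<Lambda>, OF finite_N N_nonempty \<Lambda>_empty] cond_survival_cong[of N T "\<lambda>_. m"]
      by simp
  next
    case False
    define c where "c = Max (T ` (N - S))"
    define T' where "T' = (\<lambda>i. if i \<in> S then c else T i)"
    have T_rest: "s \<le> T i \<and> T i \<le> c" if "i \<in> N - S" for i
      using that less.prems finite_N by (auto simp: c_def)
    have "c \<in> T ` (N - S)"
      unfolding c_def using finite_N False by simp
    then have "s \<le> c" "c \<le> m"
      using T_rest T_le_m by auto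
    have "card (T' ` N) < card (T ` N)"
      unfolding T'_def c_def by (rule card_image_lower_top_level[OF finite_N _ False]) (simp add: S_def m_def)
    moreover have "\<And>i. i \<in> N \<Longrightarrow> s \<le> T' i"
      using less.prems \<open>s \<le> c\<close> by (simp add: T'_def)
    ultimately have IH: "AE \<omega> in M. real_cond_exp M (F s) (cond_survival N T') \<omega>
        = exp (- survival_exponent N \<Lambda> T') * \<eta> N s \<omega>"
      by (rule less.hyps)
    have step: "AE \<omega> in M. real_cond_exp M (F s) (cond_survival N T) \<omega>
        = exp (- (\<Lambda> S m - \<Lambda> S c)) * real_cond_exp M (F s) (cond_survival N T') \<omega>"
      unfolding T'_def
      by (rule cond_exp_cond_survival_lower_top_level[OF S T_S T_rest \<open>0 \<le> s\<close> \<open>s \<le> c\<close> \<open>c \<le> m\<close>])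
    have "survival_exponent N \<Lambda> T = survival_exponent N \<Lambda> T' + (\<Lambda> S m - \<Lambda> S c)"
      unfolding T'_def using T_S T_rest \<open>c \<le> m\<close>
      by (intro survival_exponent_lower_top_level[where L=\<Lambda>, OF finite_N S(1) \<Lambda>_empty]) auto
    then have exponent: "exp (- survival_exponent N \<Lambda> T)
        = exp (- (\<Lambda> S m - \<Lambda> S c)) * exp (- survival_exponent N \<Lambda> T')"
      by (simp add: exp_add[symmetric] algebra_simps)
    from step IH show ?thesis
      by eventually_elim (simp add: exponent)
  qed
qed

definition survival_event :: "('i \<Rightarrow> real) \<Rightarrow> 'a set" where
  "survival_event T = {\<omega>\<in>space M. \<forall>i\<in>N. K i (T i) \<omega> < \<Theta> i \<omega>}"

lemma survival_event_sets:
  assumes "\<And>i. i \<in> N \<Longrightarrow> 0 \<le> T i"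
  shows "survival_event T \<in> events"
  unfolding survival_event_def
proof (rule sets.sets_Collect_finite_All'[OF _ finite_N N_nonempty])
  fix i assume "i \<in> N"
  have [measurable]: "K i (T i) \<in> borel_measurable M" "\<Theta> i \<in> borel_measurable M"
    using K_borel_measurable[OF \<open>i \<in> N\<close> assms[OF \<open>i \<in> N\<close>]]
      distributed_measurable[OF \<Theta>_exponential[OF \<open>i \<in> N\<close>]] by simp_all
  show "{\<omega>\<in>space M. K i (T i) \<omega> < \<Theta> i \<omega>} \<in> events"
    by measurable
qed

lemma set_integral_survival_event:
  assumes A: "A \<in> sets (filtration_infty M F)" and T: "\<And>i. i \<in> N \<Longrightarrow> 0 \<le> T i"
  shows "(\<integral>\<omega>\<in>A. indicator (survival_event T) \<omega> \<partial>M) = (\<integral>\<omega>\<in>A. cond_survival N T \<omega> \<partial>M)"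
proof -
  have "A \<in> events"
    using A filtration_infty_subalgebra by (auto simp: subalgebra_def)
  have "(\<integral>\<omega>\<in>A. indicator (survival_event T) \<omega> \<partial>M)
      = (\<integral>\<omega>\<in>A. exp (- (\<Sum>i\<in>N. max (K i (T i) \<omega>) 0)) \<partial>M)"
    unfolding survival_event_def using T
    by (intro set_integral_below_indep_exponentials[where X="\<lambda>i. K i (T i)", OF finite_N
          filtration_infty_subalgebra \<Theta>_indep \<Theta>_exponential _ A] K_measurable_filtration_infty)
  also have "\<dots> = (\<integral>\<omega>\<in>A. cond_survival N T \<omega> \<partial>M)"
  proof (intro set_lebesgue_integral_cong[OF \<open>A \<in> events\<close>] allI impI)
    fix \<omega> assume "\<omega> \<in> A"
    with \<open>A \<in> events\<close> have "\<omega> \<in> space M"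
      using sets.sets_into_space by blast
    then have "(\<Sum>i\<in>N. max (K i (T i) \<omega>) 0) = (\<Sum>i\<in>N. K i (T i) \<omega>)"
      using T by (intro sum.cong) (auto simp: K_nonneg max_absorb1)
    then show "exp (- (\<Sum>i\<in>N. max (K i (T i) \<omega>) 0)) = cond_survival N T \<omega>"
      by (simp add: cond_survival_def)
  qed
  finally show ?thesis .
qed

lemma cond_prob_survival_event:
  assumes "0 \<le> t" "\<And>i. i \<in> N \<Longrightarrow> t \<le> T i"
  shows "AE \<omega> in M. real_cond_exp M (F t) (indicator (survival_event T)) \<omega>
    = exp (- survival_exponent N \<Lambda> T) * \<eta> N t \<omega>"
proof -
  interpret Ft: sigma_finite_subalgebra M "F t"
    using sigma_finite_subalgebra_F \<open>0 \<le> t\<close> .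
  have T_nonneg: "0 \<le> T i" if "i \<in> N" for i
    using assms that by force
  have "AE \<omega> in M. real_cond_exp M (F t) (indicator (survival_event T)) \<omega>
      = real_cond_exp M (F t) (cond_survival N T) \<omega>"
  proof (rule Ft.real_cond_exp_charact)
    fix A assume "A \<in> sets (F t)"
    then have "A \<in> sets (filtration_infty M F)"
      using F_subalgebra_filtration_infty[OF \<open>0 \<le> t\<close>] by (auto simp: subalgebra_def)
    then have "(\<integral>\<omega>\<in>A. indicator (survival_event T) \<omega> \<partial>M) = (\<integral>\<omega>\<in>A. cond_survival N T \<omega> \<partial>M)"
      using T_nonneg by (rule set_integral_survival_event)
    also have "\<dots> = (\<integral>\<omega>\<in>A. real_cond_exp M (F t) (cond_survival N T) \<omega> \<partial>M)"
      using T_nonneg \<open>A \<in> sets (F t)\<close> by (intro Ft.real_cond_exp_intA cond_survival_integrable) auto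
    finally show "(\<integral>\<omega>\<in>A. indicator (survival_event T) \<omega> \<partial>M)
        = (\<integral>\<omega>\<in>A. real_cond_exp M (F t) (cond_survival N T) \<omega> \<partial>M)" .
  qed (use survival_event_sets T_nonneg in
    \<open>auto intro!: cond_survival_integrable integrable_real_indicator simp: less_top[symmetric]\<close>)
  moreover have "AE \<omega> in M. real_cond_exp M (F t) (cond_survival N T) \<omega>
      = exp (- survival_exponent N \<Lambda> T) * \<eta> N t \<omega>"
    using assms by (rule cond_exp_cond_survival)
  ultimately show ?thesis
    by eventually_elim simp
qed

end

theorem corollary4p2:
  fixes M :: "'a measure" and F :: "real \<Rightarrow> 'a measure" and n :: nat
    and K :: "nat \<Rightarrow> real \<Rightarrow> 'a \<Rightarrow> real" and \<Theta> :: "nat \<Rightarrow> 'a \<Rightarrow> real"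
    and \<Lambda> :: "nat set \<Rightarrow> real \<Rightarrow> real" and \<eta> :: "nat set \<Rightarrow> real \<Rightarrow> 'a \<Rightarrow> real"
    and t :: real and T :: "nat \<Rightarrow> real"
  assumes "prob_space M"
    and "usual_filtration M F"
    and "n \<ge> 1"
    and K_adapted: "\<forall>i\<in>{1..n}. adapted_proc F (K i)"
    and K_cadlag: "\<forall>i\<in>{1..n}. \<forall>\<omega>\<in>space M. cadlag (\<lambda>s. K i s \<omega>)"
    and K_mono: "\<forall>i\<in>{1..n}. \<forall>\<omega>\<in>space M. mono_on {0..} (\<lambda>s. K i s \<omega>)"
    and K_zero: "\<forall>i\<in>{1..n}. \<forall>\<omega>\<in>space M. K i 0 \<omega> = 0"
    and Theta_exp: "\<forall>i\<in>{1..n}. distributed M lborel (\<Theta> i) (exponential_density 1)"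
    and Theta_indep: "prob_space.indep_sets M
        (\<lambda>j. case j of None \<Rightarrow> sets (filtration_infty M F)
                | Some i \<Rightarrow> {\<Theta> i -` B \<inter> space M | B. B \<in> sets borel})
        (insert None (Some ` {1..n}))"
    and Lambda_empty: "\<forall>s. \<Lambda> {} s = 0"
    and Lambda_cont: "\<forall>J. J \<subseteq> {1..n} \<longrightarrow> J \<noteq> {} \<longrightarrow> continuous_on {0..} (\<Lambda> J)"
    and eta_fact: "\<forall>J. J \<subseteq> {1..n} \<longrightarrow> J \<noteq> {} \<longrightarrow> (\<forall>s\<ge>0. \<forall>\<omega>\<in>space M.
        exp (- (\<Sum>j\<in>J. K j s \<omega>)) = \<eta> J s \<omega> * exp (- \<Lambda> J s))"
    and eta_mart: "\<forall>J. J \<subseteq> {1..n} \<longrightarrow> J \<noteq> {} \<longrightarrow>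
        martingale M F (\<eta> J) \<and> (\<forall>s\<ge>0. \<forall>\<omega>\<in>space M. \<eta> J s \<omega> \<ge> 0) \<and>
        (\<forall>\<omega>\<in>space M. \<eta> J 0 \<omega> = 1)"
    and "t \<ge> 0"
    and "\<forall>i\<in>{1..n}. T i \<ge> t"
  shows "AE \<omega> in M.
     real_cond_exp M (F t)
       (indicator {\<omega>\<in>space M. \<forall>i\<in>{1..n}. hitting_time (K i) (\<Theta> i) \<omega> > ereal (T i)}) \<omega>
     = exp (- (\<Sum>J\<in>{J. J \<subseteq> {1..n} \<and> J \<noteq> {}}. \<Sum>I\<in>Pow J.
          (-1) ^ (card J - card I + 1) * \<Lambda> ({1..n} - I) (Max (T ` J))))
       * \<eta> {1..n} t \<omega>"
proof -
  interpret cox_model M F "{1..n}" K \<Theta> \<Lambda> \<eta>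
  proof (intro cox_model.intro cox_model_axioms.intro)
    show "0 \<le> t \<Longrightarrow> subalgebra M (F t)" "0 \<le> s \<Longrightarrow> s \<le> t \<Longrightarrow> sets (F s) \<subseteq> sets (F t)" for s t
      using assms(2) unfolding usual_filtration_def by blast+
  qed (use assms in simp_all)
  have T_nonneg: "0 \<le> T i" if "i \<in> {1..n}" for i
    using assms(14) bspec[OF assms(15) that] by linarith
  have "ereal (T i) < hitting_time (K i) (\<Theta> i) \<omega> \<longleftrightarrow> K i (T i) \<omega> < \<Theta> i \<omega>"
    if "i \<in> {1..n}" "\<omega> \<in> space M" for i \<omega>
  proof (rule hitting_time_greater_iff)
    show "0 \<le> T i" "mono_on {0..} (\<lambda>s. K i s \<omega>)"
      using that T_nonneg assms(6) by blast+
    then show "((\<lambda>s. K i s \<omega>) \<longlongrightarrow> K i (T i) \<omega>) (at_right (T i))"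
      using that assms(5) unfolding cadlag_def by blast
  qed
  then have "{\<omega>\<in>space M. \<forall>i\<in>{1..n}. hitting_time (K i) (\<Theta> i) \<omega> > ereal (T i)} = survival_event T"
    unfolding survival_event_def by auto
  moreover have "AE \<omega> in M. real_cond_exp M (F t) (indicator (survival_event T)) \<omega>
      = exp (- survival_exponent {1..n} \<Lambda> T) * \<eta> {1..n} t \<omega>"
    using assms(14,15) by (intro cond_prob_survival_event) auto
  ultimately show ?thesis
    by (simp only: survival_exponent_def)
qed

end
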